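(* Suppose the noise condition $\mathbb P_X(0<\Delta(X)\le\delta)\le(\gamma\delta/B)^\alpha$ for all $\delta>0$ holds for some $\alpha,\gamma\ge0$, and $\mathbb P(|\mathcal Z^*(X)|>1)=0$. Then for every policy $\pi:\mathbb R^p\to\mathcal Z^\angle$, $$d(\pi^*,\pi)\le 2\,d_\Delta(\pi^*,\pi),\qquad d_\Delta(\pi^*,\pi)\le c_1\, d(\pi^*,\pi)^{\frac{\alpha}{\alpha+1}},$$ where $c_1=(\alpha\gamma^\alpha)^{-\frac{\alpha}{\alpha+1}}(\alpha+1)\gamma^\alpha$.
   Context: Setting: $X\in\mathbb R^p$, $Y\in\mathbb R^d$ with $\|Y\|\le1$, $f^*(x)=\mathbb E[Y\mid X=x]$. $\mathcal Z=\{z:Az\le b\}$ is a polytope with $\sup_{z\in\mathcal Z}\|z\|\le B$ and finite set of extreme points $\mathcal Z^\angle$; $\mathcal Z^*(x)=\arg\min_{z\in\mathcal Z}f^*(x)^\top z$, $\pi^*(x)\in\mathcal Z^*(x)$; $\Delta(x)=\inf_{z\in\mathcal Z^\angle\setminus\mathcal Z^*(x)}f^*(x)^\top z-\inf_{z\in\mathcal Z}f^*(x)^\top z$ if $\mathcal Z^*(x)\ne\mathcal Z$, else $0$. For policies $\pi,\pi':\mathbb R^p\to\mathcal Z^\angle$, $d(\pi,\pi')=\frac1B\mathbb E_X[f^*(X)^\top(\pi'(X)-\pi(X))]$ and $d_\Delta(\pi,\pi')=\mathbb P_X(\pi(X)\ne\pi'(X))$. *)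

theory Defs
  imports "HOL-Probability.Probability"
begin

definition polyZ :: "real^'d^'m \<Rightarrow> real^'m \<Rightarrow> (real^'d) set" where
  "polyZ A b = {z. \<forall>i. (A *v z) $ i \<le> b $ i}"

definition extpts :: "(real^'d) set \<Rightarrow> (real^'d) set" where
  "extpts Z = {z. z extreme_point_of Z}"

definition optset :: "(real^'d) set \<Rightarrow> real^'d \<Rightarrow> (real^'d) set" where
  "optset Z c = {z \<in> Z. \<forall>z'\<in>Z. c \<bullet> z \<le> c \<bullet> z'}"

definition gap :: "(real^'d) set \<Rightarrow> real^'d \<Rightarrow> real" where
  "gap Z c = (if optset Z c \<noteq> Z
     then (INF z \<in> extpts Z - optset Z c. c \<bullet> z) - (INF z \<in> Z. c \<bullet> z)
     else 0)"

definition dpol :: "'a measure \<Rightarrow> ('a \<Rightarrow> real^'p) \<Rightarrow> (real^'p \<Rightarrow> real^'d) \<Rightarrow> real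
    \<Rightarrow> (real^'p \<Rightarrow> real^'d) \<Rightarrow> (real^'p \<Rightarrow> real^'d) \<Rightarrow> real" where
  "dpol M X f B p1 p2 = (1 / B) * (\<integral>\<omega>. f (X \<omega>) \<bullet> (p2 (X \<omega>) - p1 (X \<omega>)) \<partial>M)"

definition dDelta :: "'a measure \<Rightarrow> ('a \<Rightarrow> real^'p)
    \<Rightarrow> (real^'p \<Rightarrow> real^'d) \<Rightarrow> (real^'p \<Rightarrow> real^'d) \<Rightarrow> real" where
  "dDelta M X p1 p2 = measure M {\<omega> \<in> space M. p1 (X \<omega>) \<noteq> p2 (X \<omega>)}"

end

theory Submission
  imports Defs
begin

(*
  Write h = f(X) \<bullet> (pol(X) - pistar(X)), so that B d(pistar, pol) = E h. Optimality of pistar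
  gives h \<ge> 0, h vanishes where the policies agree, and elsewhere
  h \<le> norm (pol(X) - pistar(X)) \<le> 2B, because f(X) is a conditional expectation of Y and
  norm Y \<le> 1; this is the first inequality. Where the policies disagree, uniqueness of the
  optimum makes pol(X) a non-optimal vertex, hence 0 < \<Delta>(X) \<le> h. So the disagreement event
  lies in {0 < \<Delta>(X) \<le> \<delta>} \<union> {h \<ge> \<delta>}, and the margin condition together with Markov's
  inequality give d_\<Delta> \<le> (\<gamma> \<delta> / B) powr \<alpha> + B d / \<delta>; choosing \<delta> to balance the two
  terms yields the second inequality.
*)

lemma polyhedron_polyZ: "polyhedron (polyZ A b)"
proof -
  have "polyZ A b = \<Inter> (range (\<lambda>i. {z. A $ i \<bullet> z \<le> b $ i}))"
    by (auto simp: polyZ_def matrix_vector_mult_def inner_vec_def)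
  moreover have "polyhedron (\<Inter> (range (\<lambda>i. {z. A $ i \<bullet> z \<le> b $ i})))"
    by (intro polyhedron_Inter) (auto intro: polyhedron_halfspace_le)
  ultimately show ?thesis by simp
qed

lemma polytope_polyZ:
  assumes "\<forall>z \<in> polyZ A b. norm z \<le> B"
  shows "polytope (polyZ A b)"
  using assms polyhedron_polyZ by (auto simp: polytope_eq_bounded_polyhedron bounded_iff)

lemma extpts_subset: "extpts Z \<subseteq> Z"
  by (auto simp: extpts_def extreme_point_of_def)

lemma finite_extpts_polytope: "polytope Z \<Longrightarrow> finite (extpts Z)"
  unfolding extpts_def by (intro finite_polyhedron_extreme_points polytope_imp_polyhedron)

lemma notin_optset_iff:
  assumes "p \<in> optset Z c" "e \<in> Z"
  shows "e \<notin> optset Z c \<longleftrightarrow> c \<bullet> p < c \<bullet> e"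
  using assms unfolding optset_def by (auto simp: not_le)

lemma INF_inner_optset:
  assumes "p \<in> optset Z c"
  shows "(INF z\<in>Z. c \<bullet> z) = c \<bullet> p"
  using assms unfolding optset_def by (intro cInf_eq_minimum) auto

lemma extpts_not_subset_optset:
  assumes "polytope Z" "optset Z c \<noteq> Z"
  shows "\<exists>e\<in>extpts Z. e \<notin> optset Z c"
proof (rule ccontr)
  assume "\<not> ?thesis"
  then have "extpts Z \<subseteq> optset Z c" by blast
  moreover have "convex (optset Z c)"
  proof -
    have "optset Z c = Z \<inter> (\<Inter>z'\<in>Z. {z. c \<bullet> z \<le> c \<bullet> z'})"
      by (auto simp: optset_def)
    then show ?thesis
      using assms(1) by (simp add: convex_INT convex_Int convex_halfspace_le polytope_imp_convex)
  qed
  ultimately have "convex hull (extpts Z) \<subseteq> optset Z c"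
    by (rule hull_minimal)
  then have "Z \<subseteq> optset Z c"
    using Krein_Milman_Minkowski[of Z] assms(1)
    by (simp add: extpts_def polytope_imp_compact polytope_imp_convex)
  with assms(2) show False by (auto simp: optset_def)
qed

lemma gap_attained:
  assumes p: "p \<in> optset Z c" and fin: "finite (extpts Z)"
    and e: "e \<in> extpts Z - optset Z c"
  obtains e' where "e' \<in> extpts Z - optset Z c" "gap Z c = c \<bullet> e' - c \<bullet> p" "c \<bullet> e' \<le> c \<bullet> e"
proof -
  let ?S = "extpts Z - optset Z c"
  have fin_img: "finite ((\<bullet>) c ` ?S)" using fin by simp
  have "Min ((\<bullet>) c ` ?S) \<in> (\<bullet>) c ` ?S" using fin_img e by (intro Min_in) auto
  then obtain e' where e': "e' \<in> ?S" "c \<bullet> e' = Min ((\<bullet>) c ` ?S)" by auto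
  have min: "\<forall>z\<in>?S. c \<bullet> e' \<le> c \<bullet> z" using fin_img e'(2) by simp
  have "(INF z\<in>?S. c \<bullet> z) = c \<bullet> e'"
    using e'(1) min by (intro cInf_eq_minimum) auto
  moreover have "optset Z c \<noteq> Z"
    using e extpts_subset by blast
  ultimately have "gap Z c = c \<bullet> e' - c \<bullet> p"
    by (simp add: gap_def INF_inner_optset[OF p])
  with that e' min e show ?thesis by blast
qed

lemma gap_pos_le:
  assumes p: "p \<in> optset Z c" and "finite (extpts Z)"
    and e: "e \<in> extpts Z" and lt: "c \<bullet> p < c \<bullet> e"
  shows "0 < gap Z c \<and> gap Z c \<le> c \<bullet> e - c \<bullet> p"
proof -
  have "e \<notin> optset Z c"
    using notin_optset_iff[OF p] e lt extpts_subset by blast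
  then obtain e' where e': "e' \<in> extpts Z - optset Z c" "gap Z c = c \<bullet> e' - c \<bullet> p" "c \<bullet> e' \<le> c \<bullet> e"
    using gap_attained[OF p assms(2)] e by blast
  moreover have "c \<bullet> p < c \<bullet> e'"
    using e'(1) notin_optset_iff[OF p] extpts_subset by blast
  ultimately show ?thesis by simp
qed

lemma gap_between_iff:
  assumes p: "p \<in> optset Z c" and Z: "polytope Z"
  shows "0 < gap Z c \<and> gap Z c \<le> \<delta> \<longleftrightarrow> (\<exists>e\<in>extpts Z. c \<bullet> p < c \<bullet> e \<and> c \<bullet> e - c \<bullet> p \<le> \<delta>)"
proof
  assume "\<exists>e\<in>extpts Z. c \<bullet> p < c \<bullet> e \<and> c \<bullet> e - c \<bullet> p \<le> \<delta>"
  then show "0 < gap Z c \<and> gap Z c \<le> \<delta>"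
    using gap_pos_le[OF p finite_extpts_polytope[OF Z]] by fastforce
next
  assume g: "0 < gap Z c \<and> gap Z c \<le> \<delta>"
  then have "optset Z c \<noteq> Z" by (auto simp: gap_def)
  then obtain e where "e \<in> extpts Z - optset Z c"
    using extpts_not_subset_optset[OF Z] by blast
  then obtain e' where e': "e' \<in> extpts Z - optset Z c" "gap Z c = c \<bullet> e' - c \<bullet> p"
    using gap_attained[OF p finite_extpts_polytope[OF Z]] by blast
  moreover have "c \<bullet> p < c \<bullet> e'"
    using e'(1) notin_optset_iff[OF p] extpts_subset by blast
  ultimately show "\<exists>e\<in>extpts Z. c \<bullet> p < c \<bullet> e \<and> c \<bullet> e - c \<bullet> p \<le> \<delta>"
    using g by auto
qed

lemma subalgebra_vimage_algebra:
  assumes "X \<in> measurable M N"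
  shows "subalgebra M (vimage_algebra (space M) X N)"
  unfolding subalgebra_def
proof
  have X: "X \<in> space M \<rightarrow> space N"
    using assms by (rule measurable_space[THEN Pi_I])
  show "sets (vimage_algebra (space M) X N) \<subseteq> sets M"
    unfolding sets_vimage_algebra2[OF X] using measurable_sets[OF assms] by auto
qed simp

context sigma_finite_subalgebra
begin

lemma real_cond_exp_inner:
  fixes Y g :: "'a \<Rightarrow> real^'n"
  assumes Y: "integrable M Y"
    and g: "\<forall>i. AE \<omega> in M. g \<omega> $ i = real_cond_exp M F (\<lambda>\<omega>. Y \<omega> $ i) \<omega>"
  shows "AE \<omega> in M. g \<omega> \<bullet> v = real_cond_exp M F (\<lambda>\<omega>. v \<bullet> Y \<omega>) \<omega>"
proof -
  have Y_nth: "integrable M (\<lambda>\<omega>. Y \<omega> $ i)" for i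
    unfolding cart_eq_inner_axis using Y by simp
  have "AE \<omega> in M. \<forall>i\<in>UNIV. g \<omega> $ i = real_cond_exp M F (\<lambda>\<omega>. Y \<omega> $ i) \<omega>"
    using g by (intro AE_finite_allI) auto
  moreover have "AE \<omega> in M. \<forall>i\<in>UNIV. real_cond_exp M F (\<lambda>\<omega>. v $ i * Y \<omega> $ i) \<omega>
                                = v $ i * real_cond_exp M F (\<lambda>\<omega>. Y \<omega> $ i) \<omega>"
    by (intro AE_finite_allI real_cond_exp_cmult Y_nth) auto
  moreover have "AE \<omega> in M. real_cond_exp M F (\<lambda>\<omega>. \<Sum>i\<in>UNIV. v $ i * Y \<omega> $ i) \<omega>
                   = (\<Sum>i\<in>UNIV. real_cond_exp M F (\<lambda>\<omega>. v $ i * Y \<omega> $ i) \<omega>)"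
    using Y_nth by (intro real_cond_exp_sum) auto
  ultimately show ?thesis
    by eventually_elim (simp add: inner_vec_def mult.commute)
qed

end

lemma (in finite_measure_subalgebra) real_cond_exp_inner_le_norm:
  fixes Y g :: "'a \<Rightarrow> real^'n"
  assumes [measurable]: "Y \<in> borel_measurable M"
    and Y_le: "\<forall>\<omega>\<in>space M. norm (Y \<omega>) \<le> 1"
    and g: "\<forall>i. AE \<omega> in M. g \<omega> $ i = real_cond_exp M F (\<lambda>\<omega>. Y \<omega> $ i) \<omega>"
  shows "AE \<omega> in M. g \<omega> \<bullet> v \<le> norm v"
proof -
  have Y: "integrable M Y"
    using Y_le by (intro integrable_const_bound[where B=1]) auto
  have "AE \<omega> in M. v \<bullet> Y \<omega> \<le> norm v"
  proof (rule AE_I2)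
    fix \<omega> assume "\<omega> \<in> space M"
    then have "norm v * norm (Y \<omega>) \<le> norm v"
      using Y_le by (simp add: mult_left_le)
    then show "v \<bullet> Y \<omega> \<le> norm v"
      using norm_cauchy_schwarz[of v "Y \<omega>"] by linarith
  qed
  then have "AE \<omega> in M. real_cond_exp M F (\<lambda>\<omega>. v \<bullet> Y \<omega>) \<omega> \<le> norm v"
    using Y by (intro real_cond_exp_le_c) auto
  with real_cond_exp_inner[OF Y g, of v] show ?thesis
    by eventually_elim simp
qed

lemma (in finite_measure) measure_le_measure_plus_Markov:
  assumes h: "integrable M h" "AE \<omega> in M. 0 \<le> h \<omega>"
    and sets: "S \<in> sets M" "G \<in> sets M" and "0 < \<delta>"
    and cover: "AE \<omega> in M. \<omega> \<in> S \<longrightarrow> \<omega> \<in> G \<or> \<delta> \<le> h \<omega>"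
  shows "measure M S \<le> measure M G + (\<integral>\<omega>. h \<omega> \<partial>M) / \<delta>"
proof -
  let ?H = "{\<omega> \<in> space M. \<delta> \<le> h \<omega>}"
  have H: "?H \<in> sets M" using h(1) by measurable
  have "AE \<omega> in M. \<omega> \<in> S \<longrightarrow> \<omega> \<in> G \<union> ?H"
    using cover AE_space by eventually_elim auto
  then have "measure M S \<le> measure M (G \<union> ?H)"
    using sets H by (intro finite_measure_mono_AE) auto
  also have "\<dots> \<le> measure M G + measure M ?H"
    using sets H by (intro measure_Un_le)
  also have "measure M ?H \<le> (\<integral>\<omega>. h \<omega> \<partial>M) / \<delta>"
    using h \<open>0 < \<delta>\<close> by (intro integral_Markov_inequality_measure[OF _ sets.top])
  finally show ?thesis by simp
qed

(* t minimises (\<gamma> t) powr \<alpha> + d / t: the derivative vanishes when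
   t powr (\<alpha> + 1) = d / (\<alpha> \<gamma> powr \<alpha>). *)
lemma margin_tradeoff:
  fixes \<alpha> \<gamma> d :: real
  assumes "0 < \<alpha>" "0 < \<gamma>" "0 < d"
  defines "t \<equiv> (d / (\<alpha> * \<gamma> powr \<alpha>)) powr (1 / (\<alpha> + 1))"
  shows "(\<gamma> * t) powr \<alpha> + d / t
           = ((\<alpha> * \<gamma> powr \<alpha>) powr (- (\<alpha> / (\<alpha> + 1))) * (\<alpha> + 1) * \<gamma> powr \<alpha>)
             * d powr (\<alpha> / (\<alpha> + 1))"
proof -
  define k where "k = \<alpha> * \<gamma> powr \<alpha>"
  define q where "q = (d / k) powr (\<alpha> / (\<alpha> + 1))"
  have k: "0 < k" using assms by (simp add: k_def)
  have "(\<gamma> * t) powr \<alpha> = \<gamma> powr \<alpha> * t powr \<alpha>"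
    using assms by (simp add: t_def powr_mult)
  also have "t powr \<alpha> = (d / k) powr (1 / (\<alpha> + 1) * \<alpha>)"
    by (simp add: t_def k_def powr_powr)
  also have "\<dots> = q"
    by (simp add: q_def)
  finally have "(\<gamma> * t) powr \<alpha> = \<gamma> powr \<alpha> * q" .
  moreover have "d / t = k * q"
  proof -
    have "d / t = k * ((d / k) powr 1 / (d / k) powr (1 / (\<alpha> + 1)))"
      using k \<open>0 < d\<close> by (simp add: t_def k_def)
    also have "\<dots> = k * (d / k) powr (1 - 1 / (\<alpha> + 1))"
      by (simp add: powr_diff)
    also have "1 - 1 / (\<alpha> + 1) = \<alpha> / (\<alpha> + 1)"
      using assms(1) by (simp add: field_simps)
    finally show ?thesis by (simp add: q_def)
  qed
  moreover have "q = k powr (- (\<alpha> / (\<alpha> + 1))) * d powr (\<alpha> / (\<alpha> + 1))"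
    using assms k by (simp add: q_def powr_divide powr_minus_divide)
  ultimately show ?thesis
    by (simp add: k_def algebra_simps)
qed

locale polytope_policies = prob_space M
  for M :: "'a measure" and X :: "'a \<Rightarrow> real^'p" and f :: "real^'p \<Rightarrow> real^'d"
    and Z :: "(real^'d) set" and B :: real and pistar pol :: "real^'p \<Rightarrow> real^'d" +
  assumes X_measurable [measurable]: "X \<in> borel_measurable M"
    and f_measurable [measurable]: "f \<in> borel_measurable borel"
    and pistar_measurable [measurable]: "pistar \<in> borel_measurable borel"
    and pol_measurable [measurable]: "pol \<in> borel_measurable borel"
    and polytope: "polytope Z"
    and B_pos: "0 < B" and norm_le_B: "\<And>z. z \<in> Z \<Longrightarrow> norm z \<le> B"
    and pistar_extreme: "\<And>x. pistar x \<in> extpts Z"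
    and pistar_optimal: "\<And>x. pistar x \<in> optset Z (f x)"
    and pol_extreme: "\<And>x. pol x \<in> extpts Z"
    and cost_bounded: "\<And>v. AE \<omega> in M. f (X \<omega>) \<bullet> v \<le> norm v"
begin

definition regret :: "'a \<Rightarrow> real" where
  "regret \<omega> = f (X \<omega>) \<bullet> (pol (X \<omega>) - pistar (X \<omega>))"

definition disagree :: "'a set" where
  "disagree = {\<omega> \<in> space M. pistar (X \<omega>) \<noteq> pol (X \<omega>)}"

lemma regret_measurable [measurable]: "regret \<in> borel_measurable M"
  unfolding regret_def by measurable

lemma disagree_sets [measurable]: "disagree \<in> sets M"
  unfolding disagree_def by measurable

lemma regret_nonneg: "0 \<le> regret \<omega>"
  using pistar_optimal[of "X \<omega>"] pol_extreme[of "X \<omega>"] extpts_subset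
  by (auto simp: regret_def optset_def inner_diff_right)

lemma regret_le_indicator: "AE \<omega> in M. regret \<omega> \<le> 2 * B * indicator disagree \<omega>"
proof -
  let ?D = "(\<lambda>(e1, e2). e1 - e2) ` (extpts Z \<times> extpts Z)"
  \<comment> \<open>the cost bound holds a.e. for each direction separately; finitely many suffice\<close>
  have "AE \<omega> in M. \<forall>v\<in>?D. f (X \<omega>) \<bullet> v \<le> norm v"
    using finite_extpts_polytope[OF polytope] cost_bounded by (intro AE_finite_allI) auto
  with AE_space show ?thesis
  proof eventually_elim
    case (elim \<omega>)
    show ?case
    proof (cases "\<omega> \<in> disagree")
      case True
      have "regret \<omega> \<le> norm (pol (X \<omega>) - pistar (X \<omega>))"
        using elim pol_extreme pistar_extreme by (simp add: regret_def)
      also have "\<dots> \<le> B + B"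
        using norm_le_B pol_extreme pistar_extreme extpts_subset
        by (intro norm_triangle_le_diff add_mono) blast+
      finally show ?thesis using True by simp
    qed (use elim in \<open>simp add: disagree_def regret_def\<close>)
  qed
qed

lemma integrable_regret: "integrable M regret"
proof (rule integrable_const_bound[where B="2 * B"])
  show "AE \<omega> in M. norm (regret \<omega>) \<le> 2 * B"
    using regret_le_indicator
  proof eventually_elim
    case (elim \<omega>)
    then show ?case
      using regret_nonneg[of \<omega>] B_pos by (cases "\<omega> \<in> disagree") auto
  qed
qed simp

lemma dpol_eq: "dpol M X f B pistar pol = (\<integral>\<omega>. regret \<omega> \<partial>M) / B"
  by (simp add: dpol_def regret_def)

lemma dDelta_eq: "dDelta M X pistar pol = measure M disagree"
  by (simp add: dDelta_def disagree_def)

theorem dpol_le_twice_dDelta: "dpol M X f B pistar pol \<le> 2 * dDelta M X pistar pol"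
proof -
  have "(\<integral>\<omega>. regret \<omega> \<partial>M) \<le> (\<integral>\<omega>. 2 * B * indicator disagree \<omega> \<partial>M)"
    using integrable_regret regret_le_indicator integrable_real_indicator[OF disagree_sets]
    by (intro integral_mono_AE) (auto simp: less_top[symmetric])
  then have "(\<integral>\<omega>. regret \<omega> \<partial>M) \<le> 2 * B * measure M disagree"
    by simp
  then show ?thesis
    using B_pos by (simp add: dpol_eq dDelta_eq divide_le_eq algebra_simps)
qed

lemma gap_le_regret:
  assumes unique: "AE \<omega> in M. \<forall>z1 \<in> optset Z (f (X \<omega>)). \<forall>z2 \<in> optset Z (f (X \<omega>)). z1 = z2"
  shows "AE \<omega> in M. \<omega> \<in> disagree \<longrightarrow> 0 < gap Z (f (X \<omega>)) \<and> gap Z (f (X \<omega>)) \<le> regret \<omega>"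
  using unique
proof eventually_elim
  case (elim \<omega>)
  show ?case
  proof
    assume "\<omega> \<in> disagree"
    then have "pol (X \<omega>) \<notin> optset Z (f (X \<omega>))"
      using elim pistar_optimal by (auto simp: disagree_def)
    then have "f (X \<omega>) \<bullet> pistar (X \<omega>) < f (X \<omega>) \<bullet> pol (X \<omega>)"
      using notin_optset_iff[OF pistar_optimal] pol_extreme extpts_subset by blast
    then show "0 < gap Z (f (X \<omega>)) \<and> gap Z (f (X \<omega>)) \<le> regret \<omega>"
      using gap_pos_le[OF pistar_optimal finite_extpts_polytope[OF polytope] pol_extreme]
      by (simp add: regret_def inner_diff_right)
  qed
qed

(* The gap is an infimum and not obviously measurable in \<omega>; over the finitely many
   vertices the margin event becomes a finite union of measurable sets. *)
lemma margin_set_sets [measurable]: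
  "{\<omega> \<in> space M. 0 < gap Z (f (X \<omega>)) \<and> gap Z (f (X \<omega>)) \<le> \<delta>} \<in> sets M"
proof -
  have "{\<omega> \<in> space M. 0 < gap Z (f (X \<omega>)) \<and> gap Z (f (X \<omega>)) \<le> \<delta>}
      = (\<Union>e\<in>extpts Z. {\<omega> \<in> space M. f (X \<omega>) \<bullet> pistar (X \<omega>) < f (X \<omega>) \<bullet> e
                                  \<and> f (X \<omega>) \<bullet> e - f (X \<omega>) \<bullet> pistar (X \<omega>) \<le> \<delta>})"
    using gap_between_iff[OF pistar_optimal polytope] by auto
  also have "\<dots> \<in> sets M"
    using finite_extpts_polytope[OF polytope] by (intro sets.finite_UN) measurable
  finally show ?thesis .
qed

theorem dDelta_le_dpol_powr:
  assumes "0 < \<alpha>" "0 < \<gamma>"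
    and margin: "\<forall>\<delta>>0. measure M {\<omega> \<in> space M. 0 < gap Z (f (X \<omega>)) \<and> gap Z (f (X \<omega>)) \<le> \<delta>}
                        \<le> (\<gamma> * \<delta> / B) powr \<alpha>"
    and unique: "AE \<omega> in M. \<forall>z1 \<in> optset Z (f (X \<omega>)). \<forall>z2 \<in> optset Z (f (X \<omega>)). z1 = z2"
  shows "dDelta M X pistar pol
           \<le> ((\<alpha> * \<gamma> powr \<alpha>) powr (- (\<alpha> / (\<alpha> + 1))) * (\<alpha> + 1) * \<gamma> powr \<alpha>)
              * (dpol M X f B pistar pol) powr (\<alpha> / (\<alpha> + 1))"
proof (cases "(\<integral>\<omega>. regret \<omega> \<partial>M) = 0")
  case True
  then have "AE \<omega> in M. regret \<omega> = 0"
    using integral_nonneg_eq_0_iff_AE[OF integrable_regret] regret_nonneg by simp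
  with gap_le_regret[OF unique] have "AE \<omega> in M. \<omega> \<in> disagree \<longrightarrow> \<omega> \<in> {}"
    by eventually_elim auto
  then have "measure M disagree \<le> 0"
    by (metis finite_measure_mono_AE measure_empty sets.empty_sets)
  with True show ?thesis
    by (simp add: dDelta_eq dpol_eq)
next
  case False
  define d where "d = dpol M X f B pistar pol"
  define t where "t = (d / (\<alpha> * \<gamma> powr \<alpha>)) powr (1 / (\<alpha> + 1))"
  have "0 < d"
    using False regret_nonneg B_pos by (simp add: d_def dpol_eq less_le integral_nonneg_AE)
  then have "0 < t" "0 < B * t"
    using assms(1,2) B_pos by (simp_all add: t_def)
  have "AE \<omega> in M. \<omega> \<in> disagree \<longrightarrow>
          \<omega> \<in> {\<omega> \<in> space M. 0 < gap Z (f (X \<omega>)) \<and> gap Z (f (X \<omega>)) \<le> B * t}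
          \<or> B * t \<le> regret \<omega>"
    using gap_le_regret[OF unique] by eventually_elim (auto simp: disagree_def)
  then have "measure M disagree
      \<le> measure M {\<omega> \<in> space M. 0 < gap Z (f (X \<omega>)) \<and> gap Z (f (X \<omega>)) \<le> B * t}
        + (\<integral>\<omega>. regret \<omega> \<partial>M) / (B * t)"
    using integrable_regret regret_nonneg \<open>0 < B * t\<close>
    by (intro measure_le_measure_plus_Markov) auto
  also have "\<dots> \<le> (\<gamma> * t) powr \<alpha> + d / t"
    using margin \<open>0 < B * t\<close> B_pos by (auto simp: d_def dpol_eq)
  also have "\<dots> = ((\<alpha> * \<gamma> powr \<alpha>) powr (- (\<alpha> / (\<alpha> + 1))) * (\<alpha> + 1) * \<gamma> powr \<alpha>)
                   * d powr (\<alpha> / (\<alpha> + 1))"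
    using assms(1,2) \<open>0 < d\<close> unfolding t_def by (rule margin_tradeoff)
  finally show ?thesis
    by (simp add: d_def dDelta_eq)
qed

end

theorem lemma1:
  fixes M :: "'a measure"
    and X :: "'a \<Rightarrow> real^'p" and Y :: "'a \<Rightarrow> real^'d"
    and f :: "real^'p \<Rightarrow> real^'d"
    and A :: "real^'d^'m" and b :: "real^'m"
    and B \<alpha> \<gamma> :: real
    and pistar pol :: "real^'p \<Rightarrow> real^'d"
  assumes "prob_space M"
    and "X \<in> borel_measurable M" and "Y \<in> borel_measurable M"
    and "\<forall>\<omega>\<in>space M. norm (Y \<omega>) \<le> 1"
    and "f \<in> borel_measurable borel"
    and "\<forall>i. AE \<omega> in M. f (X \<omega>) $ i
            = real_cond_exp M (vimage_algebra (space M) X borel) (\<lambda>\<omega>. Y \<omega> $ i) \<omega>"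
    and "B > 0" and "\<forall>z \<in> polyZ A b. norm z \<le> B"
    and "pistar \<in> borel_measurable borel"
    and "\<forall>x. pistar x \<in> extpts (polyZ A b) \<and> pistar x \<in> optset (polyZ A b) (f x)"
    and "\<alpha> > 0" and "\<gamma> > 0"
    and "\<forall>\<delta>>0. measure M {\<omega> \<in> space M. 0 < gap (polyZ A b) (f (X \<omega>))
                                   \<and> gap (polyZ A b) (f (X \<omega>)) \<le> \<delta>}
                 \<le> (\<gamma> * \<delta> / B) powr \<alpha>"
    and "AE \<omega> in M. \<forall>z1 \<in> optset (polyZ A b) (f (X \<omega>)).
                      \<forall>z2 \<in> optset (polyZ A b) (f (X \<omega>)). z1 = z2"
    and "pol \<in> borel_measurable borel"
    and "\<forall>x. pol x \<in> extpts (polyZ A b)"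
  shows "dpol M X f B pistar pol \<le> 2 * dDelta M X pistar pol
       \<and> dDelta M X pistar pol
           \<le> ((\<alpha> * \<gamma> powr \<alpha>) powr (- (\<alpha> / (\<alpha> + 1))) * (\<alpha> + 1) * \<gamma> powr \<alpha>)
              * (dpol M X f B pistar pol) powr (\<alpha> / (\<alpha> + 1))"
proof -
  interpret prob_space M by fact
  interpret finite_measure_subalgebra M "vimage_algebra (space M) X borel"
    by unfold_locales (intro subalgebra_vimage_algebra assms(2))
  have "\<And>v. AE \<omega> in M. f (X \<omega>) \<bullet> v \<le> norm v"
    using assms(3,4,6) by (rule real_cond_exp_inner_le_norm)
  moreover have "polytope (polyZ A b)"
    using assms(8) by (rule polytope_polyZ)
  ultimately interpret polytope_policies M X f "polyZ A b" B pistar pol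
    using assms by unfold_locales auto
  show ?thesis
    using dpol_le_twice_dDelta dDelta_le_dpol_powr assms(11-14) by blast
qed

end
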